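(* With the notation below, after separating the $\nu$ null directions of $\mathcal L$, $$\sum_{a\in G_K^m}\exp\bigl(2\pi i\,Q_{\mathcal L,K}(a)\bigr)=|G_K|^{\nu}\sum_{[y]\in G_K^{\rho}}\exp\!\bigl(\pi i\,y^\top(\mathcal L_{\mathrm{reg}}\otimes K^{-1})y\bigr).$$
   Context: $K\in M_n(\mathbb Z)$ is symmetric, nondegenerate and even; $G_K=\mathbb Z^n/K\mathbb Z^n$. $\mathcal L\in M_m(\mathbb Z)$ is a symmetric integer matrix (the linking matrix of a framed link) with rank $\rho$ and nullity $\nu=m-\rho$; $U\in GL_m(\mathbb Z)$ with $U^\top\mathcal LU=\mathrm{diag}(\mathcal L_{\mathrm{reg}},0)$, $\mathcal L_{\mathrm{reg}}\in M_\rho(\mathbb Z)$ nondegenerate. For $a\in G_K^m$ with integer lifts $x=(x_1,\dots,x_m)$, $Q_{\mathcal L,K}(a)\equiv\frac12x^\top(\mathcal L\otimes K^{-1})x\pmod1$; the summand on the right is evaluated at integer lifts of $y$. *)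

theory Defs
  imports "Jordan_Normal_Form.Gauss_Jordan_Elimination" "Jordan_Normal_Form.Determinant"
    Complex_Main
begin

definition kron :: "'a::times mat \<Rightarrow> 'a mat \<Rightarrow> 'a mat" where
  "kron A B = mat (dim_row A * dim_row B) (dim_col A * dim_col B)
     (\<lambda>(i,j). A $$ (i div dim_row B, j div dim_col B) * B $$ (i mod dim_row B, j mod dim_col B))"

definition inv_real :: "int mat \<Rightarrow> real mat" where
  "inv_real K = the (mat_inverse (map_mat real_of_int K))"

definition even_mat :: "int mat \<Rightarrow> bool" where
  "even_mat K \<longleftrightarrow> (\<forall>i < dim_row K. even (K $$ (i,i)))"

(* the discriminant group G_K = Z^n / K Z^n, as a set of cosets *)
definition lat_rel :: "int mat \<Rightarrow> (int vec \<times> int vec) set" where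
  "lat_rel K = {(x,y). x \<in> carrier_vec (dim_row K) \<and> y \<in> carrier_vec (dim_row K) \<and>
      (\<exists>z \<in> carrier_vec (dim_col K). x - y = K *\<^sub>v z)}"

definition GK :: "int mat \<Rightarrow> int vec set set" where
  "GK K = carrier_vec (dim_row K) // lat_rel K"

definition GKpow :: "int mat \<Rightarrow> nat \<Rightarrow> (nat \<Rightarrow> int vec set) set" where
  "GKpow K k = PiE {..<k} (\<lambda>_. GK K)"

definition lift :: "int mat \<Rightarrow> nat \<Rightarrow> (nat \<Rightarrow> int vec set) \<Rightarrow> int vec" where
  "lift K k a = (let n = dim_row K in
     vec (k * n) (\<lambda>t. (SOME v. v \<in> a (t div n)) $ (t mod n)))"

definition qform :: "real mat \<Rightarrow> int vec \<Rightarrow> real" where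
  "qform M x = (let xr = map_vec real_of_int x in xr \<bullet> (M *\<^sub>v xr))"

(* Q_{L,K}(a) = 1/2 x^T (L \<otimes> K^{-1}) x  (real representative; mod 1 irrelevant under exp) *)
definition QLK :: "int mat \<Rightarrow> int mat \<Rightarrow> (nat \<Rightarrow> int vec set) \<Rightarrow> real" where
  "QLK L K a = 1/2 * qform (kron (map_mat real_of_int L) (inv_real K)) (lift K (dim_row L) a)"

end

theory Submission
  imports Defs
begin

(* Write b(u, v) = u^T K^-1 v and F_L(x) = x^T (L \<otimes> K^-1) x = \<Sum>_ij L_ij b(x_i, x_j), so that
   the summand is exp(\<pi> i F_L(x)) for a lift x of a.  Moving a lift x_i to x_i + K z_i changes
   F_L(x) by an even integer: b(K z, v) = z \<bullet> v is integral, the cross terms occur in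
   symmetric pairs, and z_i^T K z_j is an even symmetric matrix since K is even.  Hence
   exp(\<pi> i F_L) is a function on G_K^m.  A unimodular U permutes G_K^m via a \<mapsto> U a, and
   F_L(U x) = F_{U^T L U}(x); as U^T L U = diag(L_reg, 0), this only depends on the first \<rho>
   coordinates, and summing out the other m - \<rho> coordinates gives the factor |G_K|^\<nu>. *)

section \<open>Finite sums and integer matrices\<close>

lemma sum_lessThan_mult:
  "(\<Sum>t<k * n. f t) = (\<Sum>i<(k::nat). \<Sum>p<n. f (i * n + p))"
proof -
  have "(\<Sum>t<k * n. f t) = (\<Sum>i<k. \<Sum>t\<in>{i * n..<i * n + n}. f t)"
    by (rule sum.nat_group[symmetric])
  also have "\<dots> = (\<Sum>i<k. \<Sum>p<n. f (i * n + p))"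
    by (simp add: sum.shift_bounds_nat_ivl[of f 0 _ n, simplified] lessThan_atLeast0 add.commute)
  finally show ?thesis .
qed

lemma sum_swap_pairs:
  "(\<Sum>i\<in>A. \<Sum>k\<in>B. \<Sum>j\<in>C. \<Sum>h\<in>D. f i k j h) = (\<Sum>j\<in>C. \<Sum>h\<in>D. \<Sum>i\<in>A. \<Sum>k\<in>B. f i k j h)"
proof -
  have "(\<Sum>i\<in>A. \<Sum>k\<in>B. \<Sum>j\<in>C. \<Sum>h\<in>D. f i k j h) = (\<Sum>i\<in>A. \<Sum>j\<in>C. \<Sum>k\<in>B. \<Sum>h\<in>D. f i k j h)"
    by (rule sum.cong[OF refl], rule sum.swap)
  also have "\<dots> = (\<Sum>j\<in>C. \<Sum>i\<in>A. \<Sum>h\<in>D. \<Sum>k\<in>B. f i k j h)"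
    by (subst sum.swap) (rule sum.cong[OF refl], rule sum.cong[OF refl], rule sum.swap)
  also have "\<dots> = (\<Sum>j\<in>C. \<Sum>h\<in>D. \<Sum>i\<in>A. \<Sum>k\<in>B. f i k j h)"
    by (rule sum.cong[OF refl], rule sum.swap)
  finally show ?thesis .
qed

lemma even_double_sum_symmetric:
  fixes s :: "nat \<Rightarrow> nat \<Rightarrow> int"
  assumes "\<And>i j. i < k \<Longrightarrow> j < k \<Longrightarrow> s i j = s j i" and "\<And>i. i < k \<Longrightarrow> even (s i i)"
  shows "even (\<Sum>i<k. \<Sum>j<k. s i j)"
  using assms
proof (induction k)
  case (Suc k)
  have "(\<Sum>i<k. s i k) = (\<Sum>j<k. s k j)"
    using Suc.prems(1) by (intro sum.cong) auto
  then have "(\<Sum>i<Suc k. \<Sum>j<Suc k. s i j) = (\<Sum>i<k. \<Sum>j<k. s i j) + 2 * (\<Sum>j<k. s k j) + s k k"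
    by (simp add: sum.distrib)
  with Suc show ?case by simp
qed simp

lemma sum_PiE_restrict:
  fixes G :: "(nat \<Rightarrow> 'a) \<Rightarrow> 'b::comm_semiring_1"
  assumes "r \<le> m"
  shows "(\<Sum>a\<in>PiE {..<m} (\<lambda>_. A). G (restrict a {..<r})) =
    of_nat (card A) ^ (m - r) * (\<Sum>b\<in>PiE {..<r} (\<lambda>_. A). G b)"
  using assms
proof (induction m)
  case (Suc m)
  show ?case
  proof (cases "r = Suc m")
    case False
    then have r: "r \<le> m" using Suc.prems by simp
    have PiE_Suc: "PiE {..<Suc m} (\<lambda>_. A) = (\<lambda>(y, g). g(m := y)) ` (A \<times> PiE {..<m} (\<lambda>_. A))"
      by (simp add: lessThan_Suc PiE_insert_eq)
    have "(\<Sum>a\<in>PiE {..<Suc m} (\<lambda>_. A). G (restrict a {..<r})) =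
        (\<Sum>(y, g)\<in>A \<times> PiE {..<m} (\<lambda>_. A). G (restrict (g(m := y)) {..<r}))"
      unfolding PiE_Suc
      by (subst sum.reindex[OF inj_combinator[of m "{..<m}" "\<lambda>_. A", simplified]])
        (simp add: comp_def case_prod_unfold)
    also have "\<dots> = (\<Sum>y\<in>A. \<Sum>g\<in>PiE {..<m} (\<lambda>_. A). G (restrict g {..<r}))"
      using r by (simp add: sum.cartesian_product[symmetric] restrict_upd)
    also have "\<dots> = of_nat (card A) ^ (Suc m - r) * (\<Sum>b\<in>PiE {..<r} (\<lambda>_. A). G b)"
      using r by (simp add: Suc.IH Suc_diff_le mult.assoc)
    finally show ?thesis .
  qed (simp cong: sum.cong)
qed simp

lemma mult_eq_one_mat_entry:
  assumes "A \<in> carrier_mat n k" "B \<in> carrier_mat k n" "A * B = 1\<^sub>m n" "i < n" "j < n"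
  shows "(\<Sum>l<k. A $$ (i, l) * B $$ (l, j)) = (if i = j then 1 else 0)"
proof -
  have "(A * B) $$ (i, j) = (\<Sum>l<k. A $$ (i, l) * B $$ (l, j))"
    using assms(1,2,4,5) by (simp add: scalar_prod_def lessThan_atLeast0)
  moreover have "(A * B) $$ (i, j) = (if i = j then 1 else 0)"
    using assms by simp
  ultimately show ?thesis by simp
qed

lemma index_transpose_mult_mult_mat:
  assumes "U \<in> carrier_mat m k" "L \<in> carrier_mat m m" "j < k" "h < k"
  shows "(transpose_mat U * L * U) $$ (j, h) = (\<Sum>i<m. \<Sum>l<m. U $$ (i, j) * L $$ (i, l) * U $$ (l, h))"
proof -
  have "(transpose_mat U * L * U) $$ (j, h) = (\<Sum>i<m. U $$ (i, j) * (\<Sum>l<m. L $$ (i, l) * U $$ (l, h)))"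
    using assms by (simp add: scalar_prod_def lessThan_atLeast0)
  then show ?thesis
    by (simp add: sum_distrib_left mult.assoc)
qed

lemma symmetric_mat_entry:
  assumes "A \<in> carrier_mat n n" "transpose_mat A = A" "i < n" "j < n"
  shows "A $$ (i, j) = A $$ (j, i)"
  using assms by (metis carrier_matD index_transpose_mat(1))

lemma inv_real_mult:
  assumes K: "K \<in> carrier_mat n n" and "det K \<noteq> 0"
  shows "inv_real K \<in> carrier_mat n n"
    and "map_mat real_of_int K * inv_real K = 1\<^sub>m n"
    and "inv_real K * map_mat real_of_int K = 1\<^sub>m n"
proof -
  let ?Kr = "map_mat real_of_int K"
  have Kr: "?Kr \<in> carrier_mat n n" using K by simp
  have "?Kr \<in> Units (ring_mat TYPE(real) n (undefined::unit))"
    using det_non_zero_imp_unit[OF Kr] \<open>det K \<noteq> 0\<close> by simp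
  then obtain B where B: "mat_inverse ?Kr = Some B"
    using mat_inverse(1)[OF Kr, where b = "undefined::unit"] by fastforce
  then have "inv_real K = B" by (simp add: inv_real_def)
  then show "inv_real K \<in> carrier_mat n n" "?Kr * inv_real K = 1\<^sub>m n" "inv_real K * ?Kr = 1\<^sub>m n"
    using mat_inverse(2)[OF Kr B] by auto
qed

lemma unimodular_inverse:
  fixes U :: "int mat"
  assumes U: "U \<in> carrier_mat m m" and "det U = 1 \<or> det U = -1"
  obtains V where "V \<in> carrier_mat m m" "U * V = 1\<^sub>m m" "V * U = 1\<^sub>m m"
proof
  let ?V = "det U \<cdot>\<^sub>m adj_mat U"
  have "det U * det U = 1" using \<open>det U = 1 \<or> det U = -1\<close> by auto
  then show "?V \<in> carrier_mat m m" "U * ?V = 1\<^sub>m m" "?V * U = 1\<^sub>m m"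
    using adj_mat[OF U] by (auto simp: mult_smult_distrib[OF U] mult_smult_assoc_mat[OF _ U])
qed

section \<open>The form of L \<otimes> K\<inverse>\<close>

definition bform :: "real mat \<Rightarrow> (nat \<Rightarrow> real) \<Rightarrow> (nat \<Rightarrow> real) \<Rightarrow> real" where
  "bform M f g = (\<Sum>p<dim_row M. \<Sum>q<dim_row M. f p * M $$ (p, q) * g q)"

definition kron_form :: "int mat \<Rightarrow> real mat \<Rightarrow> (nat \<Rightarrow> int vec) \<Rightarrow> real" where
  "kron_form L M x = (\<Sum>i<dim_row L. \<Sum>j<dim_row L.
     of_int (L $$ (i, j)) * bform M (\<lambda>p. of_int (x i $ p)) (\<lambda>q. of_int (x j $ q)))"

lemma bform_cong:
  "(\<And>p. p < dim_row M \<Longrightarrow> f p = f' p) \<Longrightarrow> (\<And>q. q < dim_row M \<Longrightarrow> g q = g' q) \<Longrightarrow>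
    bform M f g = bform M f' g'"
  unfolding bform_def by (intro sum.cong refl) auto

lemma bform_add_left: "bform M (\<lambda>p. f p + f' p) g = bform M f g + bform M f' g"
  unfolding bform_def by (simp add: distrib_right sum.distrib)

lemma bform_add_right: "bform M f (\<lambda>q. g q + g' q) = bform M f g + bform M f g'"
  unfolding bform_def by (simp add: distrib_left sum.distrib)

lemma bform_sum_left:
  "bform M (\<lambda>p. \<Sum>j\<in>J. c j * f j p) g = (\<Sum>j\<in>J. c j * bform M (f j) g)"
proof -
  have "bform M (\<lambda>p. \<Sum>j\<in>J. c j * f j p) g =
      (\<Sum>p<dim_row M. \<Sum>q<dim_row M. \<Sum>j\<in>J. c j * (f j p * M $$ (p, q) * g q))"
    unfolding bform_def by (simp add: sum_distrib_right mult.assoc)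
  also have "\<dots> = (\<Sum>j\<in>J. \<Sum>p<dim_row M. \<Sum>q<dim_row M. c j * (f j p * M $$ (p, q) * g q))"
    by (subst sum.swap, subst (2) sum.swap) (rule refl)
  finally show ?thesis by (simp add: bform_def sum_distrib_left)
qed

lemma bform_sum_right:
  "bform M f (\<lambda>q. \<Sum>j\<in>J. c j * g j q) = (\<Sum>j\<in>J. c j * bform M f (g j))"
proof -
  have "bform M f (\<lambda>q. \<Sum>j\<in>J. c j * g j q) =
      (\<Sum>p<dim_row M. \<Sum>q<dim_row M. \<Sum>j\<in>J. c j * (f p * M $$ (p, q) * g j q))"
    unfolding bform_def by (simp add: sum_distrib_left mult_ac)
  also have "\<dots> = (\<Sum>j\<in>J. \<Sum>p<dim_row M. \<Sum>q<dim_row M. c j * (f p * M $$ (p, q) * g j q))"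
    by (subst sum.swap, subst (2) sum.swap) (rule refl)
  finally show ?thesis by (simp add: bform_def sum_distrib_left)
qed

lemma bform_lattice_left:
  assumes K: "K \<in> carrier_mat n n" and M: "M \<in> carrier_mat n n"
    and KM: "map_mat real_of_int K * M = 1\<^sub>m n" and K_sym: "transpose_mat K = K"
  shows "bform M (\<lambda>p. \<Sum>r<n. of_int (K $$ (p, r)) * z r) g = (\<Sum>r<n. z r * g r)"
proof -
  have inv: "(\<Sum>p<n. of_int (K $$ (r, p)) * M $$ (p, q)) = (if r = q then 1 else 0)"
    if "r < n" "q < n" for r q
  proof -
    have "(\<Sum>p<n. of_int (K $$ (r, p)) * M $$ (p, q)) = (\<Sum>p<n. map_mat real_of_int K $$ (r, p) * M $$ (p, q))"
      using K that by (intro sum.cong) auto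
    also have "\<dots> = (if r = q then 1 else 0)"
      using mult_eq_one_mat_entry[OF _ M KM that] K by simp
    finally show ?thesis .
  qed
  have "bform M (\<lambda>p. \<Sum>r<n. of_int (K $$ (p, r)) * z r) g =
      (\<Sum>p<n. \<Sum>q<n. \<Sum>r<n. z r * (of_int (K $$ (r, p)) * M $$ (p, q)) * g q)"
    unfolding bform_def sum_distrib_right carrier_matD(1)[OF M]
    by (intro sum.cong refl) (simp add: symmetric_mat_entry[OF K K_sym] mult_ac)
  also have "\<dots> = (\<Sum>q<n. \<Sum>r<n. \<Sum>p<n. z r * (of_int (K $$ (r, p)) * M $$ (p, q)) * g q)"
    by (subst sum.swap) (rule sum.cong[OF refl], rule sum.swap)
  also have "\<dots> = (\<Sum>q<n. \<Sum>r<n. z r * (\<Sum>p<n. of_int (K $$ (r, p)) * M $$ (p, q)) * g q)"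
    by (simp add: sum_distrib_left sum_distrib_right)
  also have "\<dots> = (\<Sum>q<n. \<Sum>r<n. if r = q then z r * g q else 0)"
    by (intro sum.cong refl) (simp add: inv)
  finally show ?thesis by (simp add: sum.delta')
qed

lemma bform_lattice_right:
  assumes K: "K \<in> carrier_mat n n" and M: "M \<in> carrier_mat n n"
    and MK: "M * map_mat real_of_int K = 1\<^sub>m n"
  shows "bform M f (\<lambda>q. \<Sum>r<n. of_int (K $$ (q, r)) * z r) = (\<Sum>p<n. f p * z p)"
proof -
  have inv: "(\<Sum>q<n. M $$ (p, q) * of_int (K $$ (q, r))) = (if p = r then 1 else 0)"
    if "p < n" "r < n" for p r
  proof -
    have "(\<Sum>q<n. M $$ (p, q) * of_int (K $$ (q, r))) = (\<Sum>q<n. M $$ (p, q) * map_mat real_of_int K $$ (q, r))"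
      using K that by (intro sum.cong) auto
    also have "\<dots> = (if p = r then 1 else 0)"
      using mult_eq_one_mat_entry[OF M _ MK that] K by simp
    finally show ?thesis .
  qed
  have "bform M f (\<lambda>q. \<Sum>r<n. of_int (K $$ (q, r)) * z r) =
      (\<Sum>p<n. \<Sum>q<n. \<Sum>r<n. f p * (M $$ (p, q) * of_int (K $$ (q, r))) * z r)"
    unfolding bform_def sum_distrib_left carrier_matD(1)[OF M]
    by (intro sum.cong refl) (simp add: mult_ac)
  also have "\<dots> = (\<Sum>p<n. \<Sum>r<n. f p * (\<Sum>q<n. M $$ (p, q) * of_int (K $$ (q, r))) * z r)"
    by (rule sum.cong[OF refl], subst sum.swap) (simp add: sum_distrib_left sum_distrib_right)
  also have "\<dots> = (\<Sum>p<n. \<Sum>r<n. if p = r then f p * z r else 0)"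
    by (intro sum.cong refl) (simp add: inv)
  finally show ?thesis by (simp add: sum.delta)
qed

lemma qform_kron_vec:
  assumes L: "L \<in> carrier_mat k k" and M: "M \<in> carrier_mat n n"
  shows "qform (kron (map_mat real_of_int L) M) (vec (k * n) (\<lambda>t. x (t div n) $ (t mod n))) =
    kron_form L M x"
proof -
  let ?x = "\<lambda>i p. real_of_int (x i $ p)"
  let ?L = "\<lambda>i j. map_mat real_of_int L $$ (i, j)"
  have "qform (kron (map_mat real_of_int L) M) (vec (k * n) (\<lambda>t. x (t div n) $ (t mod n))) =
    (\<Sum>t<k * n. ?x (t div n) (t mod n) * (\<Sum>s<k * n.
        ?L (t div n) (s div n) * M $$ (t mod n, s mod n) * ?x (s div n) (s mod n)))"
    using L M unfolding qform_def Let_def kron_def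
    by (auto simp: scalar_prod_def lessThan_atLeast0 intro!: sum.cong)
  also have "\<dots> = (\<Sum>i<k. \<Sum>p<n. ?x i p * (\<Sum>j<k. \<Sum>q<n.
        ?L i j * M $$ (p, q) * ?x j q))"
    by (simp add: sum_lessThan_mult)
  also have "\<dots> = (\<Sum>i<k. \<Sum>p<n. \<Sum>j<k. \<Sum>q<n. ?L i j * (?x i p * M $$ (p, q) * ?x j q))"
    by (simp add: sum_distrib_left mult_ac)
  also have "\<dots> = (\<Sum>i<k. \<Sum>j<k. \<Sum>p<n. \<Sum>q<n. ?L i j * (?x i p * M $$ (p, q) * ?x j q))"
    by (intro sum.cong refl sum.swap)
  also have "\<dots> = kron_form L M x"
    using L M by (auto simp: kron_form_def bform_def sum_distrib_left intro!: sum.cong)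
  finally show ?thesis .
qed

lemma kron_form_cong:
  "(\<And>i. i < dim_row L \<Longrightarrow> x i = y i) \<Longrightarrow> kron_form L M x = kron_form L M y"
  unfolding kron_form_def by (intro sum.cong refl) auto

lemma kron_form_four_block_zero:
  assumes A: "A \<in> carrier_mat r r"
  shows "kron_form (four_block_mat A (0\<^sub>m r s) (0\<^sub>m s r) (0\<^sub>m s s)) M x = kron_form A M x"
proof -
  let ?D = "four_block_mat A (0\<^sub>m r s) (0\<^sub>m s r) (0\<^sub>m s s)"
  let ?B = "\<lambda>j h. bform M (\<lambda>p. of_int (x j $ p)) (\<lambda>q. of_int (x h $ q))"
  have D: "?D $$ (j, h) = (if j < r \<and> h < r then A $$ (j, h) else 0)"
    if "j < r + s" "h < r + s" for j h
    using A that by simp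
  have "kron_form ?D M x = (\<Sum>j<r + s. \<Sum>h<r + s. of_int (?D $$ (j, h)) * ?B j h)"
    using A by (simp add: kron_form_def)
  also have "\<dots> = (\<Sum>j<r. \<Sum>h<r + s. of_int (?D $$ (j, h)) * ?B j h)"
    by (intro sum.mono_neutral_right) (auto simp: D)
  also have "\<dots> = (\<Sum>j<r. \<Sum>h<r. of_int (A $$ (j, h)) * ?B j h)"
    by (intro sum.cong refl sum.mono_neutral_cong_right) (auto simp: D)
  also have "\<dots> = kron_form A M x"
    using A by (simp add: kron_form_def)
  finally show ?thesis .
qed

lemma bform_lattice_shift:
  assumes K: "K \<in> carrier_mat n n" and M: "M \<in> carrier_mat n n"
    and KM: "map_mat real_of_int K * M = 1\<^sub>m n" and MK: "M * map_mat real_of_int K = 1\<^sub>m n"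
    and K_sym: "transpose_mat K = K"
  shows "bform M (\<lambda>p. f p + (\<Sum>r<n. of_int (K $$ (p, r)) * z r))
      (\<lambda>q. g q + (\<Sum>r<n. of_int (K $$ (q, r)) * z' r)) =
    bform M f g + (\<Sum>r<n. z r * g r) + (\<Sum>p<n. f p * z' p) +
    (\<Sum>r<n. \<Sum>s<n. z r * of_int (K $$ (r, s)) * z' s)"
proof -
  have "bform M (\<lambda>p. \<Sum>r<n. of_int (K $$ (p, r)) * z r) (\<lambda>q. \<Sum>r<n. of_int (K $$ (q, r)) * z' r) =
      (\<Sum>r<n. \<Sum>s<n. z r * of_int (K $$ (r, s)) * z' s)"
    by (subst bform_lattice_left[OF K M KM K_sym]) (simp add: sum_distrib_left mult_ac)
  then show ?thesis
    by (simp add: bform_add_left bform_add_right bform_lattice_left[OF K M KM K_sym]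
        bform_lattice_right[OF K M MK])
qed

lemma even_kron_quadratic_sum:
  fixes z :: "nat \<Rightarrow> nat \<Rightarrow> int"
  assumes K: "K \<in> carrier_mat n n" and K_sym: "transpose_mat K = K" and K_even: "even_mat K"
    and L: "L \<in> carrier_mat k k" and L_sym: "transpose_mat L = L"
  shows "even (\<Sum>i<k. \<Sum>j<k. L $$ (i, j) * (\<Sum>r<n. \<Sum>s<n. z i r * K $$ (r, s) * z j s))"
proof -
  define c where "c i j = (\<Sum>r<n. \<Sum>s<n. z i r * K $$ (r, s) * z j s)" for i j
  have c_sym: "c i j = c j i" for i j
  proof -
    have "c i j = (\<Sum>s<n. \<Sum>r<n. z i r * K $$ (r, s) * z j s)"
      unfolding c_def by (rule sum.swap)
    also have "\<dots> = c j i"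
      unfolding c_def by (intro sum.cong refl) (simp add: symmetric_mat_entry[OF K K_sym] mult_ac)
    finally show ?thesis .
  qed
  have "even (K $$ (r, r))" if "r < n" for r
    using K_even K that unfolding even_mat_def by simp
  then have "even (c i i)" for i
    unfolding c_def
    by (intro even_double_sum_symmetric) (auto simp: symmetric_mat_entry[OF K K_sym])
  then have "even (\<Sum>i<k. \<Sum>j<k. L $$ (i, j) * c i j)"
    by (intro even_double_sum_symmetric) (simp_all add: symmetric_mat_entry[OF L L_sym] c_sym)
  then show ?thesis by (simp add: c_def)
qed

lemma kron_form_lattice_shift:
  assumes K: "K \<in> carrier_mat n n" and M: "M \<in> carrier_mat n n"
    and KM: "map_mat real_of_int K * M = 1\<^sub>m n" and MK: "M * map_mat real_of_int K = 1\<^sub>m n"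
    and K_sym: "transpose_mat K = K" and K_even: "even_mat K"
    and L: "L \<in> carrier_mat k k" and L_sym: "transpose_mat L = L"
    and shift: "\<And>i p. i < k \<Longrightarrow> p < n \<Longrightarrow> x i $ p - y i $ p = (\<Sum>r<n. K $$ (p, r) * z i r)"
  shows "\<exists>e. kron_form L M x = kron_form L M y + 2 * of_int e"
proof -
  define a where "a i j = (\<Sum>r<n. z i r * y j $ r)" for i j
  define c where "c i j = (\<Sum>r<n. \<Sum>s<n. z i r * K $$ (r, s) * z j s)" for i j
  have x_eq: "real_of_int (x i $ p) = of_int (y i $ p) + (\<Sum>r<n. of_int (K $$ (p, r)) * of_int (z i r))"
    if "i < k" "p < n" for i p
  proof -
    have "x i $ p = y i $ p + (\<Sum>r<n. K $$ (p, r) * z i r)" using shift[OF that] by simp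
    then show ?thesis by simp
  qed
  have "bform M (\<lambda>p. of_int (x i $ p)) (\<lambda>q. of_int (x j $ q)) =
      bform M (\<lambda>p. of_int (y i $ p)) (\<lambda>q. of_int (y j $ q)) + of_int (a i j + a j i + c i j)"
    if "i < k" "j < k" for i j
  proof -
    have "bform M (\<lambda>p. of_int (x i $ p)) (\<lambda>q. of_int (x j $ q)) =
        bform M (\<lambda>p. of_int (y i $ p) + (\<Sum>r<n. of_int (K $$ (p, r)) * of_int (z i r)))
          (\<lambda>q. of_int (y j $ q) + (\<Sum>r<n. of_int (K $$ (q, r)) * of_int (z j r)))"
      using M that by (intro bform_cong) (simp_all add: x_eq)
    then show ?thesis
      by (simp only: bform_lattice_shift[OF K M KM MK K_sym]) (simp add: a_def c_def mult_ac)
  qed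
  then have "kron_form L M x = kron_form L M y +
      of_int (\<Sum>i<k. \<Sum>j<k. L $$ (i, j) * (a i j + a j i + c i j))"
    using L by (simp add: kron_form_def distrib_left sum.distrib)
  moreover obtain e where e: "(\<Sum>i<k. \<Sum>j<k. L $$ (i, j) * c i j) = 2 * e"
    using even_kron_quadratic_sum[OF K K_sym K_even L L_sym] unfolding c_def by blast
  moreover have "(\<Sum>i<k. \<Sum>j<k. L $$ (i, j) * a j i) = (\<Sum>i<k. \<Sum>j<k. L $$ (i, j) * a i j)"
    by (subst sum.swap) (simp add: symmetric_mat_entry[OF L L_sym])
  ultimately show ?thesis
    by (intro exI[of _ "(\<Sum>i<k. \<Sum>j<k. L $$ (i, j) * a i j) + e"]) (simp add: distrib_left sum.distrib)
qed

section \<open>The discriminant group\<close>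

lemma lat_rel_iff:
  assumes K: "K \<in> carrier_mat n n"
  shows "(x, y) \<in> lat_rel K \<longleftrightarrow> x \<in> carrier_vec n \<and> y \<in> carrier_vec n \<and>
     (\<exists>z. \<forall>p<n. x $ p - y $ p = (\<Sum>r<n. K $$ (p, r) * z r))"
proof
  assume "(x, y) \<in> lat_rel K"
  then obtain z where x: "x \<in> carrier_vec n" and y: "y \<in> carrier_vec n" and z: "z \<in> carrier_vec n"
    and xy: "x - y = K *\<^sub>v z"
    using K unfolding lat_rel_def by auto
  have "x $ p - y $ p = (\<Sum>r<n. K $$ (p, r) * z $ r)" if "p < n" for p
  proof -
    have "x $ p - y $ p = (x - y) $ p" using that x y by simp
    then show ?thesis unfolding xy using that K z by (simp add: scalar_prod_def lessThan_atLeast0)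
  qed
  with x y show "x \<in> carrier_vec n \<and> y \<in> carrier_vec n \<and>
     (\<exists>z. \<forall>p<n. x $ p - y $ p = (\<Sum>r<n. K $$ (p, r) * z r))" by blast
next
  assume "x \<in> carrier_vec n \<and> y \<in> carrier_vec n \<and>
     (\<exists>z. \<forall>p<n. x $ p - y $ p = (\<Sum>r<n. K $$ (p, r) * z r))"
  then obtain z where x: "x \<in> carrier_vec n" and y: "y \<in> carrier_vec n"
    and z: "\<forall>p<n. x $ p - y $ p = (\<Sum>r<n. K $$ (p, r) * z r)" by blast
  have "x - y = K *\<^sub>v vec n z"
    using x y K z by (auto simp: scalar_prod_def lessThan_atLeast0 intro!: eq_vecI)
  then show "(x, y) \<in> lat_rel K" using x y K unfolding lat_rel_def by auto
qed

lemma lat_rel_sym: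
  assumes K: "K \<in> carrier_mat n n" and "(x, y) \<in> lat_rel K"
  shows "(y, x) \<in> lat_rel K"
proof -
  obtain z where "x \<in> carrier_vec n" "y \<in> carrier_vec n"
    and z: "\<forall>p<n. x $ p - y $ p = (\<Sum>r<n. K $$ (p, r) * z r)"
    using assms(2) unfolding lat_rel_iff[OF K] by blast
  moreover have "\<exists>z'. \<forall>p<n. y $ p - x $ p = (\<Sum>r<n. K $$ (p, r) * z' r)"
  proof (intro exI allI impI)
    fix p assume "p < n"
    show "y $ p - x $ p = (\<Sum>r<n. K $$ (p, r) * - z r)"
      using z[rule_format, OF \<open>p < n\<close>] unfolding mult_minus_right sum_negf by linarith
  qed
  ultimately show ?thesis
    unfolding lat_rel_iff[OF K] by blast
qed

lemma lat_rel_trans: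
  assumes K: "K \<in> carrier_mat n n" and "(x, y) \<in> lat_rel K" "(y, w) \<in> lat_rel K"
  shows "(x, w) \<in> lat_rel K"
proof -
  obtain z z' where "x \<in> carrier_vec n" "w \<in> carrier_vec n"
    and z: "\<forall>p<n. x $ p - y $ p = (\<Sum>r<n. K $$ (p, r) * z r)"
    and z': "\<forall>p<n. y $ p - w $ p = (\<Sum>r<n. K $$ (p, r) * z' r)"
    using assms(2,3) unfolding lat_rel_iff[OF K] by blast
  moreover have "\<exists>z''. \<forall>p<n. x $ p - w $ p = (\<Sum>r<n. K $$ (p, r) * z'' r)"
  proof (intro exI allI impI)
    fix p assume "p < n"
    show "x $ p - w $ p = (\<Sum>r<n. K $$ (p, r) * (z r + z' r))"
      using z[rule_format, OF \<open>p < n\<close>] z'[rule_format, OF \<open>p < n\<close>]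
      unfolding distrib_left sum.distrib by linarith
  qed
  ultimately show ?thesis
    unfolding lat_rel_iff[OF K] by blast
qed

lemma lat_rel_equiv:
  assumes K: "K \<in> carrier_mat n n"
  shows "equiv (carrier_vec n) (lat_rel K)"
proof (rule equivI)
  show "lat_rel K \<subseteq> carrier_vec n \<times> carrier_vec n"
    using lat_rel_iff[OF K] by auto
  show "refl_on (carrier_vec n) (lat_rel K)"
  proof (rule refl_onI)
    fix x :: "int vec" assume "x \<in> carrier_vec n"
    then show "(x, x) \<in> lat_rel K"
      unfolding lat_rel_iff[OF K] by (intro conjI exI[of _ "\<lambda>_. 0"]) auto
  qed
  show "sym (lat_rel K)"
    using lat_rel_sym[OF K] by (rule symI)
  show "trans (lat_rel K)"
    using lat_rel_trans[OF K] by (rule transI)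
qed

lemma lat_rel_tuple_witness:
  assumes K: "K \<in> carrier_mat n n" and rel: "\<And>i. i < k \<Longrightarrow> (x i, y i) \<in> lat_rel K"
  shows "\<exists>z. \<forall>i<k. \<forall>p<n. x i $ p - y i $ p = (\<Sum>r<n. K $$ (p, r) * z i r)"
proof -
  have "\<forall>i\<in>{..<k}. \<exists>z. \<forall>p<n. x i $ p - y i $ p = (\<Sum>r<n. K $$ (p, r) * z r)"
    using rel lat_rel_iff[OF K] by blast
  then have "\<exists>z. \<forall>i\<in>{..<k}. \<forall>p<n. x i $ p - y i $ p = (\<Sum>r<n. K $$ (p, r) * z i r)"
    by (rule bchoice)
  then show ?thesis
    by (simp add: Ball_def)
qed

lemma GK_some_elem:
  assumes K: "K \<in> carrier_mat n n" and c: "c \<in> GK K"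
  shows "some_elem c \<in> c" and "some_elem c \<in> carrier_vec n" and "lat_rel K `` {some_elem c} = c"
proof -
  have equiv: "equiv (carrier_vec n) (lat_rel K)" by (rule lat_rel_equiv[OF K])
  have quot: "c \<in> carrier_vec n // lat_rel K" using c K by (simp add: GK_def)
  show elem: "some_elem c \<in> c"
    using in_quotient_imp_non_empty[OF equiv quot] by (rule some_elem_nonempty)
  from quot obtain v where c_v: "c = lat_rel K `` {v}" by (rule quotientE)
  with elem have "(v, some_elem c) \<in> lat_rel K" by simp
  from equiv_class_eq[OF equiv this] c_v show "lat_rel K `` {some_elem c} = c"
    by simp
  show "some_elem c \<in> carrier_vec n"
    using in_quotient_imp_subset[OF equiv quot] elem by blast
qed

lemma lat_rel_class_in_GK:
  "K \<in> carrier_mat n n \<Longrightarrow> v \<in> carrier_vec n \<Longrightarrow> lat_rel K `` {v} \<in> GK K"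
  unfolding GK_def by (auto intro: quotientI)

lemma some_elem_lat_rel_class:
  assumes K: "K \<in> carrier_mat n n" and v: "v \<in> carrier_vec n"
  shows "(some_elem (lat_rel K `` {v}), v) \<in> lat_rel K"
proof -
  have "some_elem (lat_rel K `` {v}) \<in> lat_rel K `` {v}"
    by (rule GK_some_elem(1)[OF K lat_rel_class_in_GK[OF K v]])
  then have "(v, some_elem (lat_rel K `` {v})) \<in> lat_rel K" by simp
  then show ?thesis
    using lat_rel_equiv[OF K] by (blast elim: equivE dest: symD)
qed

lemma qform_kron_lift:
  assumes K: "K \<in> carrier_mat n n" and L: "L \<in> carrier_mat k k" and M: "M \<in> carrier_mat n n"
  shows "qform (kron (map_mat real_of_int L) M) (lift K k a) = kron_form L M (some_elem \<circ> a)"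
proof -
  have "lift K k a = vec (k * n) (\<lambda>t. (some_elem \<circ> a) (t div n) $ (t mod n))"
    using K by (simp add: lift_def some_elem_def)
  then show ?thesis
    by (simp only: qform_kron_vec[OF L M])
qed

lemma cis_kron_form_lat_rel:
  assumes K: "K \<in> carrier_mat n n" and M: "M \<in> carrier_mat n n"
    and KM: "map_mat real_of_int K * M = 1\<^sub>m n" and MK: "M * map_mat real_of_int K = 1\<^sub>m n"
    and K_sym: "transpose_mat K = K" and K_even: "even_mat K"
    and L: "L \<in> carrier_mat k k" and L_sym: "transpose_mat L = L"
    and rel: "\<And>i. i < k \<Longrightarrow> (x i, y i) \<in> lat_rel K"
  shows "cis (pi * kron_form L M x) = cis (pi * kron_form L M y)"
proof -
  from lat_rel_tuple_witness[OF K rel]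
  obtain z where "\<forall>i<k. \<forall>p<n. x i $ p - y i $ p = (\<Sum>r<n. K $$ (p, r) * z i r)" ..
  then have "\<exists>e. kron_form L M x = kron_form L M y + 2 * of_int e"
    by (intro kron_form_lattice_shift[OF K M KM MK K_sym K_even L L_sym]) simp
  then obtain e where e: "kron_form L M x = kron_form L M y + 2 * of_int e" ..
  have "cis (pi * kron_form L M x) = cis (pi * kron_form L M y) * cis (2 * pi * of_int e)"
    unfolding e cis_mult by (simp add: algebra_simps)
  then show ?thesis by simp
qed

section \<open>Unimodular change of variables\<close>

definition tuple_mult :: "int mat \<Rightarrow> nat \<Rightarrow> (nat \<Rightarrow> int vec) \<Rightarrow> nat \<Rightarrow> int vec" where
  "tuple_mult U n x i = vec n (\<lambda>p. \<Sum>j<dim_col U. U $$ (i, j) * x j $ p)"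

lemma tuple_mult_carrier [simp]: "tuple_mult U n x i \<in> carrier_vec n"
  unfolding tuple_mult_def by simp

lemma tuple_mult_lat_rel:
  assumes K: "K \<in> carrier_mat n n" and rel: "\<And>j. j < dim_col U \<Longrightarrow> (x j, y j) \<in> lat_rel K"
  shows "(tuple_mult U n x i, tuple_mult U n y i) \<in> lat_rel K"
proof -
  let ?m = "dim_col U"
  from lat_rel_tuple_witness[OF K rel]
  obtain z where z: "\<forall>j<?m. \<forall>p<n. x j $ p - y j $ p = (\<Sum>r<n. K $$ (p, r) * z j r)" ..
  have "\<exists>z'. \<forall>p<n. tuple_mult U n x i $ p - tuple_mult U n y i $ p = (\<Sum>r<n. K $$ (p, r) * z' r)"
  proof (intro exI allI impI)
    fix p assume p: "p < n"
    have "tuple_mult U n x i $ p - tuple_mult U n y i $ p = (\<Sum>j<?m. U $$ (i, j) * (x j $ p - y j $ p))"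
      unfolding tuple_mult_def using p by (simp add: sum_subtractf right_diff_distrib)
    also have "\<dots> = (\<Sum>j<?m. \<Sum>r<n. U $$ (i, j) * (K $$ (p, r) * z j r))"
      by (intro sum.cong refl) (simp add: z[rule_format] p sum_distrib_left)
    also have "\<dots> = (\<Sum>r<n. K $$ (p, r) * (\<Sum>j<?m. U $$ (i, j) * z j r))"
      by (subst sum.swap) (simp add: sum_distrib_left mult_ac)
    finally show "tuple_mult U n x i $ p - tuple_mult U n y i $ p =
        (\<Sum>r<n. K $$ (p, r) * (\<Sum>j<?m. U $$ (i, j) * z j r))" .
  qed
  then show ?thesis
    unfolding lat_rel_iff[OF K] by simp
qed

lemma tuple_mult_mult:
  assumes V: "V \<in> carrier_mat m m" and U: "U \<in> carrier_mat m m" and VU: "V * U = 1\<^sub>m m"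
    and x: "\<And>j. j < m \<Longrightarrow> x j \<in> carrier_vec n" and i: "i < m"
  shows "tuple_mult V n (tuple_mult U n x) i = x i"
proof (rule eq_vecI)
  show "dim_vec (tuple_mult V n (tuple_mult U n x) i) = dim_vec (x i)"
    using x[OF i] by simp
  fix p assume "p < dim_vec (x i)"
  then have p: "p < n" using x[OF i] by simp
  have "tuple_mult V n (tuple_mult U n x) i $ p = (\<Sum>k<m. \<Sum>j<m. V $$ (i, k) * U $$ (k, j) * x j $ p)"
    unfolding tuple_mult_def using p U V by (simp add: sum_distrib_left mult_ac)
  also have "\<dots> = (\<Sum>j<m. (\<Sum>k<m. V $$ (i, k) * U $$ (k, j)) * x j $ p)"
    by (subst sum.swap) (simp add: sum_distrib_right)
  also have "\<dots> = (\<Sum>j<m. if i = j then x j $ p else 0)"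
    by (intro sum.cong refl) (simp add: mult_eq_one_mat_entry[OF V U VU i])
  also have "\<dots> = x i $ p" using i by simp
  finally show "tuple_mult V n (tuple_mult U n x) i $ p = x i $ p" .
qed

lemma kron_form_tuple_mult:
  assumes L: "L \<in> carrier_mat m m" and U: "U \<in> carrier_mat m m" and M: "M \<in> carrier_mat n n"
  shows "kron_form L M (tuple_mult U n x) = kron_form (transpose_mat U * L * U) M x"
proof -
  define X where "X j = (\<lambda>p. real_of_int (x j $ p))" for j
  have B: "bform M (\<lambda>p. of_int (tuple_mult U n x i $ p)) (\<lambda>q. of_int (tuple_mult U n x l $ q)) =
      (\<Sum>j<m. \<Sum>h<m. of_int (U $$ (i, j)) * of_int (U $$ (l, h)) * bform M (X j) (X h))" for i l
  proof -
    have "bform M (\<lambda>p. of_int (tuple_mult U n x i $ p)) (\<lambda>q. of_int (tuple_mult U n x l $ q)) =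
        bform M (\<lambda>p. \<Sum>j<m. of_int (U $$ (i, j)) * X j p) (\<lambda>q. \<Sum>h<m. of_int (U $$ (l, h)) * X h q)"
      using U M by (intro bform_cong) (simp_all add: tuple_mult_def X_def)
    then show ?thesis
      by (simp only: bform_sum_left bform_sum_right) (simp add: sum_distrib_left mult_ac)
  qed
  have "kron_form L M (tuple_mult U n x) = (\<Sum>i<m. \<Sum>l<m. \<Sum>j<m. \<Sum>h<m.
      of_int (U $$ (i, j) * L $$ (i, l) * U $$ (l, h)) * bform M (X j) (X h))"
    using L by (simp add: kron_form_def B sum_distrib_left mult_ac)
  also have "\<dots> = (\<Sum>j<m. \<Sum>h<m. \<Sum>i<m. \<Sum>l<m.
      of_int (U $$ (i, j) * L $$ (i, l) * U $$ (l, h)) * bform M (X j) (X h))"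
    by (rule sum_swap_pairs)
  also have "\<dots> = (\<Sum>j<m. \<Sum>h<m. of_int ((transpose_mat U * L * U) $$ (j, h)) * bform M (X j) (X h))"
    by (intro sum.cong refl, subst index_transpose_mult_mult_mat[OF U L]) (auto simp: sum_distrib_right)
  also have "\<dots> = kron_form (transpose_mat U * L * U) M x"
    using L U by (simp add: kron_form_def X_def)
  finally show ?thesis .
qed

definition GKpow_mult :: "int mat \<Rightarrow> int mat \<Rightarrow> (nat \<Rightarrow> int vec set) \<Rightarrow> nat \<Rightarrow> int vec set" where
  "GKpow_mult K U a = (\<lambda>i\<in>{..<dim_row U}. lat_rel K `` {tuple_mult U (dim_row K) (some_elem \<circ> a) i})"

lemma GKpow_mult_in:
  assumes "K \<in> carrier_mat n n" "U \<in> carrier_mat m m"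
  shows "GKpow_mult K U a \<in> GKpow K m"
  unfolding GKpow_mult_def GKpow_def restrict_PiE_iff
  using assms by (auto intro!: lat_rel_class_in_GK)

lemma some_elem_GKpow_mult:
  assumes K: "K \<in> carrier_mat n n" and U: "U \<in> carrier_mat m m" and i: "i < m"
  shows "(some_elem (GKpow_mult K U a i), tuple_mult U n (some_elem \<circ> a) i) \<in> lat_rel K"
  using some_elem_lat_rel_class[OF K tuple_mult_carrier] i K U by (simp add: GKpow_mult_def)

lemma GKpow_mult_inverse:
  assumes K: "K \<in> carrier_mat n n" and V: "V \<in> carrier_mat m m" and U: "U \<in> carrier_mat m m"
    and VU: "V * U = 1\<^sub>m m" and a: "a \<in> GKpow K m"
  shows "GKpow_mult K V (GKpow_mult K U a) = a"
proof
  fix i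
  have a_i: "a i \<in> GK K" if "i < m" for i
    using a that by (auto simp: GKpow_def)
  show "GKpow_mult K V (GKpow_mult K U a) i = a i"
  proof (cases "i < m")
    case i: True
    let ?x = "tuple_mult U n (some_elem \<circ> a)"
    have dims: "dim_row K = n" "dim_row U = m" "dim_col V = m" "dim_row V = m"
      using K U V by auto
    have "(tuple_mult V n (some_elem \<circ> GKpow_mult K U a) i, tuple_mult V n ?x i) \<in> lat_rel K"
      using some_elem_GKpow_mult[OF K U] by (intro tuple_mult_lat_rel[OF K]) (simp add: dims)
    moreover have "tuple_mult V n ?x i = some_elem (a i)"
      using tuple_mult_mult[OF V U VU _ i] GK_some_elem(2)[OF K a_i] by simp
    ultimately have "lat_rel K `` {tuple_mult V n (some_elem \<circ> GKpow_mult K U a) i} =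
        lat_rel K `` {some_elem (a i)}"
      using equiv_class_eq[OF lat_rel_equiv[OF K]] by simp
    then show ?thesis
      using i GK_some_elem(3)[OF K a_i[OF i]] by (simp add: GKpow_mult_def dims)
  next
    case False
    then have "a i = undefined"
      using a by (intro PiE_arb[where S = "{..<m}"]) (simp_all add: GKpow_def)
    moreover have "GKpow_mult K V b i = undefined" for b
      using False V by (simp add: GKpow_mult_def)
    ultimately show ?thesis by simp
  qed
qed

lemma bij_betw_GKpow_mult:
  assumes K: "K \<in> carrier_mat n n" and U: "U \<in> carrier_mat m m" and V: "V \<in> carrier_mat m m"
    and "U * V = 1\<^sub>m m" and "V * U = 1\<^sub>m m"
  shows "bij_betw (GKpow_mult K U) (GKpow K m) (GKpow K m)"
  using GKpow_mult_inverse[OF K V U \<open>V * U = 1\<^sub>m m\<close>] GKpow_mult_inverse[OF K U V \<open>U * V = 1\<^sub>m m\<close>]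
    GKpow_mult_in[OF K U] GKpow_mult_in[OF K V]
  by (intro bij_betw_byWitness[where f' = "GKpow_mult K V"]) auto

lemma cis_kron_form_GKpow_mult:
  assumes K: "K \<in> carrier_mat n n" and M: "M \<in> carrier_mat n n"
    and KM: "map_mat real_of_int K * M = 1\<^sub>m n" and MK: "M * map_mat real_of_int K = 1\<^sub>m n"
    and K_sym: "transpose_mat K = K" and K_even: "even_mat K"
    and L: "L \<in> carrier_mat m m" and L_sym: "transpose_mat L = L" and U: "U \<in> carrier_mat m m"
  shows "cis (pi * kron_form L M (some_elem \<circ> GKpow_mult K U a)) =
    cis (pi * kron_form (transpose_mat U * L * U) M (some_elem \<circ> a))"
proof -
  have "cis (pi * kron_form L M (some_elem \<circ> GKpow_mult K U a)) =
      cis (pi * kron_form L M (tuple_mult U n (some_elem \<circ> a)))"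
    using some_elem_GKpow_mult[OF K U]
    by (intro cis_kron_form_lat_rel[OF K M KM MK K_sym K_even L L_sym]) simp
  then show ?thesis
    by (simp add: kron_form_tuple_mult[OF L U M])
qed

theorem lemma4p5:
  fixes K L U Lreg :: "int mat" and n m \<rho> :: nat
  assumes K_carr: "K \<in> carrier_mat n n"
    and K_sym: "transpose_mat K = K"
    and K_nondeg: "det K \<noteq> 0"
    and K_even: "even_mat K"
    and L_carr: "L \<in> carrier_mat m m"
    and L_sym: "transpose_mat L = L"
    and rho_le: "\<rho> \<le> m"
    and U_carr: "U \<in> carrier_mat m m"
    and U_unimod: "det U = 1 \<or> det U = -1"
    and Lreg_carr: "Lreg \<in> carrier_mat \<rho> \<rho>"
    and Lreg_nondeg: "det Lreg \<noteq> 0"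
    and diag: "transpose_mat U * L * U =
       four_block_mat Lreg (0\<^sub>m \<rho> (m - \<rho>)) (0\<^sub>m (m - \<rho>) \<rho>) (0\<^sub>m (m - \<rho>) (m - \<rho>))"
  shows "(\<Sum>a \<in> GKpow K m. cis (2 * pi * QLK L K a)) =
    of_nat (card (GK K)) ^ (m - \<rho>) *
    (\<Sum>y \<in> GKpow K \<rho>. cis (pi * qform (kron (map_mat real_of_int Lreg) (inv_real K)) (lift K \<rho> y)))"
proof -
  note K_inv = inv_real_mult[OF K_carr K_nondeg]
  obtain V where V: "V \<in> carrier_mat m m" "U * V = 1\<^sub>m m" "V * U = 1\<^sub>m m"
    using unimodular_inverse[OF U_carr U_unimod] .
  let ?F = "\<lambda>L a. cis (pi * kron_form L (inv_real K) (some_elem \<circ> a))"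
  have "?F L (GKpow_mult K U a) = ?F Lreg (restrict a {..<\<rho>})" for a
  proof -
    have "?F L (GKpow_mult K U a) = ?F (transpose_mat U * L * U) a"
      by (rule cis_kron_form_GKpow_mult[OF K_carr K_inv K_sym K_even L_carr L_sym U_carr])
    also have "\<dots> = ?F Lreg a"
      unfolding diag kron_form_four_block_zero[OF Lreg_carr] ..
    also have "kron_form Lreg (inv_real K) (some_elem \<circ> a) =
        kron_form Lreg (inv_real K) (some_elem \<circ> restrict a {..<\<rho>})"
      by (rule kron_form_cong) (use Lreg_carr in simp)
    finally show ?thesis .
  qed
  moreover have "cis (2 * pi * QLK L K a) = ?F L a" for a
    using L_carr by (simp add: QLK_def qform_kron_lift[OF K_carr L_carr K_inv(1)])
  ultimately have "(\<Sum>a \<in> GKpow K m. cis (2 * pi * QLK L K a)) =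
      (\<Sum>a \<in> GKpow K m. ?F Lreg (restrict a {..<\<rho>}))"
    using sum.reindex_bij_betw[OF bij_betw_GKpow_mult[OF K_carr U_carr V], of "?F L"] by simp
  also have "\<dots> = of_nat (card (GK K)) ^ (m - \<rho>) * (\<Sum>y \<in> GKpow K \<rho>. ?F Lreg y)"
    unfolding GKpow_def by (rule sum_PiE_restrict[OF rho_le])
  finally show ?thesis
    by (simp add: qform_kron_lift[OF K_carr Lreg_carr K_inv(1)])
qed

end
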